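(* Let $A$ be a continuous symmetric tensor field of type $(1,1)$ on a Riemannian $2$-manifold $M$, and let $q\in M$ be an isolated $A$-singularity, i.e. there is a neighborhood $V$ of $q$ such that the eigenvalues of $A(p)$ are distinct for every $p\in V-\{q\}$. Then for every continuous field of directions (line field) $\xi$ on a punctured neighborhood of $q$, one has $$2\,j(A)=j\Big(\big(A-\tfrac12(\operatorname{tr}A)I\big)\xi\Big)+j(\xi).$$
   Context: For a continuous line field $\eta$ on a punctured neighborhood of $q$, $j(\eta)$ denotes its Poincar\'e-Hopf index at $q$: with an orthonormal frame $\{e_1,e_2\}$ near $q$, a positively parametrized Jordan curve $\gamma:[0,1]\to M$ around $q$ (in a small neighborhood), and a continuous $\theta:[0,1]\to\mathbb R$ with $\cos\theta(t)e_1+\sin\theta(t)e_2$ spanning $\eta(\gamma(t))$, $j(\eta)=(\theta(1)-\theta(0))/(2\pi)\in\frac12\mathbb Z$. On $V-\{q\}$ the eigenspaces of $A$ form two continuous line fields, which have the same index at $q$; this common index is denoted $j(A)$. For a tensor field $B$ and a line field $\xi$, $B\xi$ denotes the line field obtained by applying $B(p)$ to any vector spanning $\xi(p)$ (here $B=A-\frac12(\operatorname{tr}A)I$ is traceless symmetric and nonzero, hence invertible, on $V-\{q\}$). *)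

theory Defs
  imports "HOL-Analysis.Analysis" "HOL-Complex_Analysis.Winding_Numbers"
begin

text \<open>A neighbourhood of q in the Riemannian surface M is identified (via a chart)
with an open subset of the complex plane. Tangent vectors are written in components with respect
to a fixed continuous orthonormal frame e1, e2 (type real^2, e1 = axis 1 1, e2 = axis 2 1).
In such a frame a symmetric (1,1)-tensor is a symmetric 2x2 real matrix; a line field assigns to
each point a one-dimensional subspace of real^2.\<close>

definition frame_vec :: "real \<Rightarrow> real^2" where
  "frame_vec \<theta> = vector [cos \<theta>, sin \<theta>]"

definition continuous_line_field :: "complex set \<Rightarrow> (complex \<Rightarrow> (real^2) set) \<Rightarrow> bool" where
  "continuous_line_field S \<xi> \<longleftrightarrow>
     (\<forall>p\<in>S. \<exists>N v. open N \<and> p \<in> N \<and> continuous_on (N \<inter> S) v \<and>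
        (\<forall>x\<in>N \<inter> S. v x \<noteq> 0 \<and> \<xi> x = span {v x}))"

definition ph_index :: "(complex \<Rightarrow> (real^2) set) \<Rightarrow> complex \<Rightarrow> real" where
  "ph_index \<eta> q = (THE k. \<exists>\<epsilon>>0. \<forall>\<gamma> \<theta>.
      simple_path \<gamma> \<and> pathfinish \<gamma> = pathstart \<gamma> \<and>
      path_image \<gamma> \<subseteq> ball q \<epsilon> - {q} \<and> winding_number \<gamma> q = 1 \<and>
      continuous_on {0..1} \<theta> \<and>
      (\<forall>t\<in>{0..1}. \<eta> (\<gamma> t) = span {frame_vec (\<theta> t)})
      \<longrightarrow> k = (\<theta> 1 - \<theta> 0) / (2 * pi))"

definition eigenvalues_of :: "real^2^2 \<Rightarrow> real set" where
  "eigenvalues_of M = {c. \<exists>v. v \<noteq> 0 \<and> M *v v = c *\<^sub>R v}"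

text \<open>One of the two eigenline fields of A (the one of the larger eigenvalue);
both have the same index, denoted j(A).\<close>
definition eigen_line_field :: "(complex \<Rightarrow> real^2^2) \<Rightarrow> complex \<Rightarrow> (real^2) set" where
  "eigen_line_field A p = {v. A p *v v = Max (eigenvalues_of (A p)) *\<^sub>R v}"

definition tensor_index :: "(complex \<Rightarrow> real^2^2) \<Rightarrow> complex \<Rightarrow> real" where
  "tensor_index A q = ph_index (eigen_line_field A) q"

definition apply_tensor :: "(complex \<Rightarrow> real^2^2) \<Rightarrow> (complex \<Rightarrow> (real^2) set) \<Rightarrow> complex \<Rightarrow> (real^2) set" where
  "apply_tensor B \<xi> p = (\<lambda>v. B p *v v) ` \<xi> p"

end

theory Submission
  imports Defs "HOL-Complex_Analysis.Riemann_Mapping"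
begin

(* The line through z \<noteq> 0 is encoded by the unit number
   sgn z ^ 2, which is cis (2 * \<theta>) for the line of angle \<theta>, so the index of a line field is half the
   winding number of its code along a small loop around q. A symmetric A acts as
   z \<mapsto> (trace A / 2) * z + \<beta> * cnj z with \<beta> = deviator A; its top eigenline has code sgn \<beta>, and
   B = A - (trace A / 2) I sends a line with code w to the line with code (sgn \<beta>)^2 * cnj w.
   Hence code (B \<xi>) = code (eigenline)^2 * cnj (code \<xi>) pointwise, and passing to winding numbers
   gives j(B \<xi>) = 2 j(A) - j(\<xi>). *)

definition complex_of_vec :: "real^2 \<Rightarrow> complex" where
  "complex_of_vec w = Complex (w$1) (w$2)"

definition vec_of_complex :: "complex \<Rightarrow> real^2" where
  "vec_of_complex z = vector [Re z, Im z]"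

lemma complex_of_vec_of_complex [simp]: "complex_of_vec (vec_of_complex z) = z"
  by (simp add: complex_of_vec_def vec_of_complex_def)

lemma vec_of_complex_of_vec [simp]: "vec_of_complex (complex_of_vec w) = w"
  by (simp add: complex_of_vec_def vec_of_complex_def vec_eq_iff forall_2)

lemma complex_of_vec_eq_iff: "complex_of_vec v = complex_of_vec w \<longleftrightarrow> v = w"
  by (metis vec_of_complex_of_vec)

lemma complex_of_vec_eq_0_iff [simp]: "complex_of_vec w = 0 \<longleftrightarrow> w = 0"
  by (simp add: complex_of_vec_def complex_eq_iff vec_eq_iff forall_2)

lemma complex_of_vec_scaleR: "complex_of_vec (c *\<^sub>R w) = of_real c * complex_of_vec w"
  by (simp add: complex_of_vec_def complex_eq_iff)

lemma complex_of_vec_diff: "complex_of_vec (v - w) = complex_of_vec v - complex_of_vec w"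
  by (simp add: complex_of_vec_def complex_eq_iff)

lemma complex_of_vec_frame_vec: "complex_of_vec (frame_vec t) = cis t"
  by (simp add: complex_of_vec_def frame_vec_def complex_eq_iff)

lemma continuous_on_complex_of_vec [continuous_intros]:
  "continuous_on S f \<Longrightarrow> continuous_on S (\<lambda>x. complex_of_vec (f x))"
  unfolding complex_of_vec_def Complex_eq by (intro continuous_intros)

lemma span_singleton_eq_iff:
  fixes u w :: "'a::real_vector"
  assumes "u \<noteq> 0" "w \<noteq> 0"
  shows "span {u} = span {w} \<longleftrightarrow> (\<exists>c. c \<noteq> 0 \<and> u = c *\<^sub>R w)"
proof
  assume "span {u} = span {w}"
  then obtain c where "u = c *\<^sub>R w"
    using span_base[of u "{u}"] by (auto simp: span_singleton)
  with assms show "\<exists>c. c \<noteq> 0 \<and> u = c *\<^sub>R w" by auto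
next
  assume "\<exists>c. c \<noteq> 0 \<and> u = c *\<^sub>R w"
  then obtain c where "c \<noteq> 0" "u = c *\<^sub>R w" by blast
  then have "w = inverse c *\<^sub>R u" by simp
  then have "w \<in> span {u}"
    by (metis span_base span_scale singletonI)
  moreover have "u \<in> span {w}"
    using \<open>u = c *\<^sub>R w\<close> by (simp add: span_base span_scale)
  ultimately show "span {u} = span {w}"
    by (simp add: span_eq)
qed

lemma sgn_cnj: "sgn (cnj z) = cnj (sgn z)"
  by (simp add: sgn_eq)

lemma sgn_power2_of_real_mult:
  fixes z :: complex
  assumes "c \<noteq> 0"
  shows "sgn (of_real c * z) ^ 2 = sgn z ^ 2"
proof -
  have "sgn c ^ 2 = 1" using assms by (simp add: sgn_if)
  then show ?thesis
    by (simp add: sgn_mult sgn_of_real power_mult_distrib flip: of_real_power)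
qed

lemma sgn_power2_eq_cis_iff:
  fixes z :: complex
  assumes "z \<noteq> 0"
  shows "sgn z ^ 2 = cis (2 * t) \<longleftrightarrow> (\<exists>c. c \<noteq> 0 \<and> z = of_real c * cis t)"
proof
  assume "sgn z ^ 2 = cis (2 * t)"
  then have "(sgn z - cis t) * (sgn z + cis t) = 0"
    by (simp add: algebra_simps power2_eq_square cis_mult flip: mult_2)
  then have "sgn z = cis t \<or> sgn z = - cis t"
    by (auto simp: add_eq_0_iff)
  then obtain s :: real where "s \<noteq> 0" and s: "sgn z = of_real s * cis t"
    by (metis mult_1 mult_minus_left of_real_1 of_real_minus zero_neq_neg_one zero_neq_one)
  define r where "r = cmod z"
  have "r \<noteq> 0"
    using assms by (simp add: r_def)
  have "of_real r * sgn z = z"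
    using assms by (simp add: r_def sgn_eq)
  then have "z = of_real (r * s) * cis t"
    by (simp add: s mult.assoc)
  with \<open>r \<noteq> 0\<close> \<open>s \<noteq> 0\<close> show "\<exists>c. c \<noteq> 0 \<and> z = of_real c * cis t"
    by (intro exI[of _ "r * s"]) simp
next
  assume "\<exists>c. c \<noteq> 0 \<and> z = of_real c * cis t"
  then obtain c where "c \<noteq> 0" "z = of_real c * cis t"
    by blast
  then have "sgn z ^ 2 = cis t ^ 2"
    by (simp add: sgn_power2_of_real_mult)
  also have "\<dots> = cis (2 * t)"
    by (metis cis_mult mult_2 power2_eq_square)
  finally show "sgn z ^ 2 = cis (2 * t)" .
qed

lemma span_eq_span_frame_vec_iff:
  assumes "u \<noteq> 0"
  shows "span {u} = span {frame_vec t} \<longleftrightarrow> sgn (complex_of_vec u) ^ 2 = cis (2 * t)"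
proof -
  have "frame_vec t \<noteq> 0"
    by (metis complex_of_vec_eq_0_iff complex_of_vec_frame_vec cis_neq_zero)
  then have "span {u} = span {frame_vec t} \<longleftrightarrow> (\<exists>c. c \<noteq> 0 \<and> u = c *\<^sub>R frame_vec t)"
    by (rule span_singleton_eq_iff[OF assms])
  also have "\<dots> \<longleftrightarrow> (\<exists>c. c \<noteq> 0 \<and> complex_of_vec u = of_real c * cis t)"
    by (metis complex_of_vec_eq_iff complex_of_vec_frame_vec complex_of_vec_scaleR)
  also have "\<dots> \<longleftrightarrow> sgn (complex_of_vec u) ^ 2 = cis (2 * t)"
    using assms by (simp add: sgn_power2_eq_cis_iff)
  finally show ?thesis .
qed

definition is_line :: "(real^2) set \<Rightarrow> bool" where
  "is_line L \<longleftrightarrow> (\<exists>u. u \<noteq> 0 \<and> L = span {u})"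

(* SOME picks an arbitrary spanning vector; the value does not depend on the choice because
   sgn z ^ 2 is invariant under real scaling of z. *)
definition line_code :: "(real^2) set \<Rightarrow> complex" where
  "line_code L = sgn (complex_of_vec (SOME u. u \<in> L \<and> u \<noteq> 0)) ^ 2"

lemma line_code_span:
  assumes "u \<noteq> 0"
  shows "line_code (span {u}) = sgn (complex_of_vec u) ^ 2"
proof -
  define w where "w = (SOME w. w \<in> span {u} \<and> w \<noteq> 0)"
  have "\<exists>w. w \<in> span {u} \<and> w \<noteq> 0"
    using assms span_base by blast
  then have "w \<in> span {u}" "w \<noteq> 0"
    unfolding w_def by (metis (mono_tags, lifting) someI_ex)+
  then obtain c where "c \<noteq> 0" "w = c *\<^sub>R u"
    by (auto simp: span_singleton)
  then show ?thesis
    by (simp add: line_code_def w_def[symmetric] complex_of_vec_scaleR sgn_power2_of_real_mult)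
qed

lemma line_eq_span_frame_vec_iff:
  "is_line L \<Longrightarrow> L = span {frame_vec t} \<longleftrightarrow> line_code L = cis (2 * t)"
  unfolding is_line_def by (metis line_code_span span_eq_span_frame_vec_iff)

lemma norm_line_code: "is_line L \<Longrightarrow> norm (line_code L) = 1"
  by (auto simp: is_line_def line_code_span norm_power norm_sgn)

lemma csqrt_conj_equation: "\<beta> * cnj (csqrt \<beta>) = of_real (cmod \<beta>) * csqrt \<beta>"
proof -
  have "\<beta> * cnj (csqrt \<beta>) = csqrt \<beta> * (csqrt \<beta> * cnj (csqrt \<beta>))"
    by (metis power2_csqrt power2_eq_square mult.assoc)
  also have "csqrt \<beta> * cnj (csqrt \<beta>) = of_real (cmod \<beta>)"
    by (simp flip: complex_norm_square)
  finally show ?thesis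
    by (simp add: mult.commute)
qed

lemma conj_equation_solvable_iff:
  "(\<exists>z. z \<noteq> 0 \<and> \<beta> * cnj z = of_real s * z) \<longleftrightarrow> \<bar>s\<bar> = cmod \<beta>"
proof
  assume "\<exists>z. z \<noteq> 0 \<and> \<beta> * cnj z = of_real s * z"
  then obtain z where "z \<noteq> 0" "\<beta> * cnj z = of_real s * z"
    by blast
  then have "cmod \<beta> * cmod z = \<bar>s\<bar> * cmod z"
    by (metis complex_mod_cnj norm_mult norm_of_real)
  with \<open>z \<noteq> 0\<close> show "\<bar>s\<bar> = cmod \<beta>"
    by simp
next
  assume s: "\<bar>s\<bar> = cmod \<beta>"
  show "\<exists>z. z \<noteq> 0 \<and> \<beta> * cnj z = of_real s * z"
  proof (cases "\<beta> = 0")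
    case True
    with s show ?thesis
      by (intro exI[of _ 1]) simp
  next
    case False
    then have "csqrt \<beta> \<noteq> 0"
      by simp
    from s consider "s = cmod \<beta>" | "s = - cmod \<beta>"
      by linarith
    then show ?thesis
    proof cases
      case 1
      with \<open>csqrt \<beta> \<noteq> 0\<close> show ?thesis
        using csqrt_conj_equation by blast
    next
      case 2
      with \<open>csqrt \<beta> \<noteq> 0\<close> show ?thesis
        by (intro exI[of _ "\<i> * csqrt \<beta>"]) (simp add: csqrt_conj_equation algebra_simps)
    qed
  qed
qed

lemma conj_equation_solutions:
  assumes "\<beta> \<noteq> 0"
  shows "\<beta> * cnj z = of_real (cmod \<beta>) * z \<longleftrightarrow> (\<exists>t. z = of_real t * csqrt \<beta>)"
proof
  define w where "w = csqrt \<beta>"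
  have "w \<noteq> 0"
    using assms by (simp add: w_def)
  have "\<beta> = w * w"
    using power2_csqrt[of \<beta>] by (simp add: w_def power2_eq_square)
  have "of_real (cmod \<beta>) = w * cnj w"
    by (simp add: w_def flip: complex_norm_square)
  assume "\<beta> * cnj z = of_real (cmod \<beta>) * z"
  then have "w * (w * cnj z) = w * (cnj w * z)"
    unfolding \<open>of_real (cmod \<beta>) = w * cnj w\<close> by (simp only: \<open>\<beta> = w * w\<close> mult.assoc)
  then have "cnj (z * cnj w) = z * cnj w"
    using \<open>w \<noteq> 0\<close> by (simp add: mult.commute)
  then have "z * cnj w = of_real (Re (z * cnj w))"
    by (metis Reals_cnj_iff complex_is_Real_iff of_real_Re)
  then have "z * of_real (cmod w ^ 2) = of_real (Re (z * cnj w)) * w"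
    by (metis complex_norm_square mult.assoc mult.commute)
  with \<open>w \<noteq> 0\<close> have "z = of_real (Re (z * cnj w) / cmod w ^ 2) * w"
    by (simp add: field_simps)
  then show "\<exists>t. z = of_real t * csqrt \<beta>"
    unfolding w_def by blast
next
  assume "\<exists>t. z = of_real t * csqrt \<beta>"
  then show "\<beta> * cnj z = of_real (cmod \<beta>) * z"
    using csqrt_conj_equation[of \<beta>] by (auto simp: algebra_simps)
qed

lemma sgn_csqrt_power2: "sgn (csqrt z) ^ 2 = sgn z"
  by (metis power2_csqrt power2_eq_square sgn_mult)

definition deviator :: "real^2^2 \<Rightarrow> complex" where
  "deviator M = Complex ((M$1$1 - M$2$2) / 2) (M$1$2)"

lemma continuous_on_deviator [continuous_intros]:
  "continuous_on S A \<Longrightarrow> continuous_on S (\<lambda>x. deviator (A x))"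
  unfolding deviator_def Complex_eq by (intro continuous_intros) auto

lemma complex_of_vec_symmetric_mult:
  fixes M :: "real^2^2"
  assumes "transpose M = M"
  shows "complex_of_vec (M *v v) =
    of_real (trace M / 2) * complex_of_vec v + deviator M * cnj (complex_of_vec v)"
proof -
  have "transpose M $ 1 $ 2 = M $ 2 $ 1"
    by (simp add: transpose_def)
  with assms have "M$2$1 = M$1$2"
    by simp
  moreover have "trace M = M$1$1 + M$2$2"
    by (simp add: trace_def sum_2)
  ultimately show ?thesis
    by (simp add: complex_eq_iff complex_of_vec_def deviator_def matrix_vector_mult_def sum_2)
      (simp add: field_simps)
qed

lemma complex_of_vec_traceless_mult:
  fixes M :: "real^2^2"
  assumes "transpose M = M"
  shows "complex_of_vec ((M - (trace M / 2) *\<^sub>R mat 1) *v v) = deviator M * cnj (complex_of_vec v)"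
  by (simp add: matrix_vector_mult_diff_rdistrib complex_of_vec_diff complex_of_vec_scaleR
      complex_of_vec_symmetric_mult[OF assms] flip: scaleR_matrix_vector_assoc)

lemma symmetric_eigen_iff:
  fixes M :: "real^2^2"
  assumes "transpose M = M"
  shows "M *v v = c *\<^sub>R v \<longleftrightarrow>
    deviator M * cnj (complex_of_vec v) = of_real (c - trace M / 2) * complex_of_vec v"
proof -
  have "M *v v = c *\<^sub>R v \<longleftrightarrow> complex_of_vec (M *v v) = complex_of_vec (c *\<^sub>R v)"
    by (simp add: complex_of_vec_eq_iff)
  also have "\<dots> \<longleftrightarrow> deviator M * cnj (complex_of_vec v) = of_real (c - trace M / 2) * complex_of_vec v"
    by (simp add: complex_of_vec_symmetric_mult[OF assms] complex_of_vec_scaleR of_real_diff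
        left_diff_distrib eq_diff_eq add.commute)
  finally show ?thesis .
qed

lemma eigenvalues_of_symmetric:
  fixes M :: "real^2^2"
  assumes "transpose M = M"
  shows "eigenvalues_of M = {trace M / 2 + cmod (deviator M), trace M / 2 - cmod (deviator M)}"
proof -
  have "c \<in> eigenvalues_of M \<longleftrightarrow>
      c = trace M / 2 + cmod (deviator M) \<or> c = trace M / 2 - cmod (deviator M)" for c
  proof -
    have "c \<in> eigenvalues_of M \<longleftrightarrow> (\<exists>v. v \<noteq> 0 \<and>
        deviator M * cnj (complex_of_vec v) = of_real (c - trace M / 2) * complex_of_vec v)"
      by (simp add: eigenvalues_of_def symmetric_eigen_iff[OF assms])
    also have "\<dots> \<longleftrightarrow> (\<exists>z. z \<noteq> 0 \<and> deviator M * cnj z = of_real (c - trace M / 2) * z)"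
      by (metis complex_of_vec_eq_0_iff complex_of_vec_of_complex)
    also have "\<dots> \<longleftrightarrow> \<bar>c - trace M / 2\<bar> = cmod (deviator M)"
      by (rule conj_equation_solvable_iff)
    also have "\<dots> \<longleftrightarrow> c = trace M / 2 + cmod (deviator M) \<or> c = trace M / 2 - cmod (deviator M)"
      using norm_ge_zero[of "deviator M"] by arith
    finally show ?thesis .
  qed
  then show ?thesis
    by blast
qed

lemma top_eigenspace_symmetric:
  fixes M :: "real^2^2"
  assumes "transpose M = M" and "card (eigenvalues_of M) = 2"
  shows "deviator M \<noteq> 0"
    and "{v. M *v v = Max (eigenvalues_of M) *\<^sub>R v} = span {vec_of_complex (csqrt (deviator M))}"
proof -
  note eig = eigenvalues_of_symmetric[OF assms(1)]
  show "deviator M \<noteq> 0"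
    using assms(2) by (auto simp: eig)
  then have "Max (eigenvalues_of M) = trace M / 2 + cmod (deviator M)"
    by (simp add: eig max_def)
  then have "{v. M *v v = Max (eigenvalues_of M) *\<^sub>R v} =
      {v. deviator M * cnj (complex_of_vec v) = of_real (cmod (deviator M)) * complex_of_vec v}"
    by (simp add: symmetric_eigen_iff[OF assms(1)])
  also have "\<dots> = {v. \<exists>t. complex_of_vec v = of_real t * csqrt (deviator M)}"
    using conj_equation_solutions[OF \<open>deviator M \<noteq> 0\<close>] by simp
  also have "\<dots> = span {vec_of_complex (csqrt (deviator M))}"
    by (auto simp: span_singleton complex_of_vec_eq_iff[symmetric] complex_of_vec_scaleR)
  finally show "{v. M *v v = Max (eigenvalues_of M) *\<^sub>R v} = span {vec_of_complex (csqrt (deviator M))}" .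
qed

lemma eigen_line_symmetric:
  fixes M :: "real^2^2"
  assumes "transpose M = M" and "card (eigenvalues_of M) = 2"
  shows "is_line {v. M *v v = Max (eigenvalues_of M) *\<^sub>R v}"
    and "line_code {v. M *v v = Max (eigenvalues_of M) *\<^sub>R v} = sgn (deviator M)"
proof -
  have "vec_of_complex (csqrt (deviator M)) \<noteq> 0"
    using top_eigenspace_symmetric(1)[OF assms]
    by (metis complex_of_vec_eq_0_iff complex_of_vec_of_complex csqrt_eq_0)
  then show "is_line {v. M *v v = Max (eigenvalues_of M) *\<^sub>R v}"
    and "line_code {v. M *v v = Max (eigenvalues_of M) *\<^sub>R v} = sgn (deviator M)"
    by (auto simp: top_eigenspace_symmetric(2)[OF assms] is_line_def line_code_span sgn_csqrt_power2)
qed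

lemma traceless_image_line:
  fixes M :: "real^2^2"
  assumes "transpose M = M" and "deviator M \<noteq> 0" and "is_line L"
  shows "is_line ((\<lambda>v. (M - (trace M / 2) *\<^sub>R mat 1) *v v) ` L)"
    and "line_code ((\<lambda>v. (M - (trace M / 2) *\<^sub>R mat 1) *v v) ` L) =
      sgn (deviator M) ^ 2 * cnj (line_code L)"
proof -
  define B where "B = M - (trace M / 2) *\<^sub>R mat 1"
  obtain u where "u \<noteq> 0" "L = span {u}"
    using assms(3) is_line_def by blast
  then have image: "(\<lambda>v. B *v v) ` L = span {B *v u}"
    using span_linear_image[OF matrix_vector_mul_linear, of B "{u}"] by simp
  have Bu: "complex_of_vec (B *v u) = deviator M * cnj (complex_of_vec u)"
    unfolding B_def by (rule complex_of_vec_traceless_mult[OF assms(1)])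
  have "complex_of_vec (B *v u) \<noteq> 0"
    using assms(2) \<open>u \<noteq> 0\<close> by (simp add: Bu)
  then have "B *v u \<noteq> 0"
    by simp
  then show "is_line ((\<lambda>v. (M - (trace M / 2) *\<^sub>R mat 1) *v v) ` L)"
    unfolding B_def[symmetric] image is_line_def by blast
  have "line_code (span {B *v u}) = sgn (deviator M) ^ 2 * cnj (line_code (span {u}))"
    using \<open>B *v u \<noteq> 0\<close> \<open>u \<noteq> 0\<close>
    by (simp add: line_code_span Bu sgn_mult sgn_cnj power_mult_distrib)
  then show "line_code ((\<lambda>v. (M - (trace M / 2) *\<^sub>R mat 1) *v v) ` L) =
      sgn (deviator M) ^ 2 * cnj (line_code L)"
    unfolding B_def[symmetric] image by (simp only: \<open>L = span {u}\<close>)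
qed

lemma continuous_line_field_is_line:
  "continuous_line_field S \<xi> \<Longrightarrow> x \<in> S \<Longrightarrow> is_line (\<xi> x)"
  unfolding continuous_line_field_def is_line_def by blast

lemma continuous_on_line_code:
  assumes "continuous_line_field S \<xi>"
  shows "continuous_on S (\<lambda>x. line_code (\<xi> x))"
proof (rule continuous_on_eq_continuous_within[THEN iffD2], rule ballI)
  fix x assume "x \<in> S"
  then obtain N v where N: "open N" "x \<in> N" and "continuous_on (N \<inter> S) v"
    and v: "\<forall>y\<in>N \<inter> S. v y \<noteq> 0 \<and> \<xi> y = span {v y}"
    using assms unfolding continuous_line_field_def by blast
  then have "continuous_on (N \<inter> S) (\<lambda>y. sgn (complex_of_vec (v y)) ^ 2)"
    by (intro continuous_intros) auto
  then have "continuous_on (N \<inter> S) (\<lambda>y. line_code (\<xi> y))"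
    by (rule continuous_on_eq) (simp add: v line_code_span)
  then have "continuous (at x within N \<inter> S) (\<lambda>y. line_code (\<xi> y))"
    using \<open>x \<in> S\<close> N(2) continuous_on_eq_continuous_within by blast
  moreover have "at x within N \<inter> S = at x within S"
    by (rule at_within_nhd[OF N(2,1)]) auto
  ultimately show "continuous (at x within S) (\<lambda>y. line_code (\<xi> y))"
    by simp
qed

lemma cis_lift_along_path:
  fixes f :: "complex \<Rightarrow> complex"
  assumes "continuous_on S f" "\<forall>x\<in>S. norm (f x) = 1" "path \<gamma>" "path_image \<gamma> \<subseteq> S"
  obtains g where "continuous_on {0..1} g" "\<forall>t\<in>{0..1}. f (\<gamma> t) = cis (g t)"
proof -
  have "continuous_on {0..1} (f \<circ> \<gamma>)"
    using assms(1,3,4) unfolding path_def path_image_def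
    by (metis continuous_on_compose continuous_on_subset)
  moreover have "contractible {0..1::real}"
    by (simp add: convex_imp_contractible)
  moreover have unit: "norm (f (\<gamma> t)) = 1" if "t \<in> {0..1}" for t
    using assms(2,4) that unfolding path_image_def by blast
  then have "(f \<circ> \<gamma>) t \<noteq> 0" if "t \<in> {0..1}" for t
    using that by fastforce
  ultimately obtain h where h: "continuous_on {0..1} h" "\<And>t. t \<in> {0..1} \<Longrightarrow> f (\<gamma> t) = exp (h t)"
    using continuous_logarithm_on_contractible[of "{0..1}" "f \<circ> \<gamma>"] by (metis comp_apply)
  have "f (\<gamma> t) = cis (Im (h t))" if "t \<in> {0..1}" for t
  proof -
    have "Re (h t) = 0"
      using unit[OF that] h(2)[OF that] by (simp add: norm_exp_eq_Re)
    then have "h t = \<i> * of_real (Im (h t))"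
      by (simp add: complex_eq_iff)
    then show ?thesis
      using h(2)[OF that] by (metis cis_conv_exp)
  qed
  moreover have "continuous_on {0..1} (\<lambda>t. Im (h t))"
    by (intro continuous_intros h(1))
  ultimately show ?thesis
    using that by blast
qed

lemma winding_number_cis_lift:
  assumes "continuous_on {0..1} g" "\<forall>t\<in>{0..1}. F t = cis (g t)"
  shows "winding_number F 0 = of_real ((g 1 - g 0) / (2 * pi))"
proof -
  define p where "p t = \<i> * of_real (g t)" for t
  have "path p"
    unfolding p_def path_def by (intro continuous_intros assms(1))
  have "winding_number F 0 = winding_number (exp \<circ> p) 0"
    by (rule winding_number_cong) (use assms(2) in \<open>auto simp: p_def cis_conv_exp\<close>)
  also have "\<dots> = (pathfinish p - pathstart p) / (2 * of_real pi * \<i>)"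
    by (rule winding_number_compose_exp[OF \<open>path p\<close>])
  also have "\<dots> = of_real ((g 1 - g 0) / (2 * pi))"
    by (simp add: p_def pathfinish_def pathstart_def field_simps)
  finally show ?thesis .
qed

lemma punctured_ball_retraction:
  fixes q :: "'a::real_normed_vector"
  assumes "0 < R" "R < r"
  obtains \<rho> where "continuous_on (- {q}) \<rho>" "\<rho> \<in> - {q} \<rightarrow> ball q r - {q}"
    "\<And>z. z \<in> cball q R \<Longrightarrow> \<rho> z = z"
proof
  define \<rho> where "\<rho> z = q + min 1 (R / norm (z - q)) *\<^sub>R (z - q)" for z
  show "continuous_on (- {q}) \<rho>"
    unfolding \<rho>_def by (intro continuous_intros) auto
  have "norm (\<rho> z - q) = min (norm (z - q)) R" if "z \<noteq> q" for z
  proof -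
    have "norm (\<rho> z - q) = min 1 (R / norm (z - q)) * norm (z - q)"
      using \<open>0 < R\<close> by (simp add: \<rho>_def abs_of_nonneg)
    also have "\<dots> = min (norm (z - q)) R"
      using that by (simp add: min_def field_simps)
    finally show ?thesis .
  qed
  then have "0 < norm (\<rho> z - q) \<and> norm (\<rho> z - q) < r" if "z \<noteq> q" for z
    using that assms by auto
  then show "\<rho> \<in> - {q} \<rightarrow> ball q r - {q}"
    by (fastforce simp: dist_norm norm_minus_commute)
  show "\<rho> z = z" if "z \<in> cball q R" for z
    using that by (cases "z = q") (auto simp: \<rho>_def dist_norm norm_minus_commute)
qed

(* Equal winding numbers give a homotopy in - {q}; a radial truncation fixing both loops pushes it
   into the punctured ball. *)
lemma homotopic_loops_punctured_ball:
  fixes p1 p2 :: "real \<Rightarrow> complex"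
  assumes "path p1" "path p2" "pathfinish p1 = pathstart p1" "pathfinish p2 = pathstart p2"
    and "path_image p1 \<subseteq> ball q r - {q}" "path_image p2 \<subseteq> ball q r - {q}"
    and "winding_number p1 q = winding_number p2 q"
  shows "homotopic_loops (ball q r - {q}) p1 p2"
proof -
  define K where "K = path_image p1 \<union> path_image p2"
  have "compact K" "K \<noteq> {}"
    using assms(1,2) by (simp_all add: K_def compact_Un compact_path_image path_image_nonempty)
  then obtain z where "z \<in> K" and far: "\<And>y. y \<in> K \<Longrightarrow> dist q y \<le> dist q z"
    using continuous_attains_sup[of K "dist q"] continuous_on_dist[OF continuous_on_const continuous_on_id]
    by meson
  have "K \<subseteq> ball q r - {q}"
    using assms(5,6) by (simp add: K_def)
  with \<open>z \<in> K\<close> have "0 < dist q z" "dist q z < r"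
    by auto
  then obtain \<rho> where \<rho>: "continuous_on (- {q}) \<rho>" "\<rho> \<in> - {q} \<rightarrow> ball q r - {q}"
    and fixed: "\<And>y. y \<in> cball q (dist q z) \<Longrightarrow> \<rho> y = y"
    using punctured_ball_retraction[where q = q] by blast
  have "q \<notin> path_image p1" "q \<notin> path_image p2"
    using assms(5,6) by auto
  then have "homotopic_loops (- {q}) p1 p2"
    using winding_number_homotopic_loops_eq assms(1-4,7) by blast
  then have middle: "homotopic_loops (ball q r - {q}) (\<rho> \<circ> p1) (\<rho> \<circ> p2)"
    using \<rho> by (rule homotopic_loops_continuous_image)
  have ends: "homotopic_loops (ball q r - {q}) p (\<rho> \<circ> p)"
    if "path p" "pathfinish p = pathstart p" "path_image p \<subseteq> K" for p
  proof (rule homotopic_loops_eq)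
    show "path_image p \<subseteq> ball q r - {q}"
      using that(3) \<open>K \<subseteq> ball q r - {q}\<close> by blast
    show "p t = (\<rho> \<circ> p) t" if "t \<in> {0..1}" for t
    proof -
      have "p t \<in> K"
        using \<open>path_image p \<subseteq> K\<close> that by (auto simp: path_image_def)
      then show ?thesis
        using fixed far by simp
    qed
  qed (fact that)+
  have "homotopic_loops (ball q r - {q}) p1 (\<rho> \<circ> p1)"
    using ends[OF assms(1,3)] by (simp add: K_def)
  moreover have "homotopic_loops (ball q r - {q}) (\<rho> \<circ> p2) p2"
    using ends[OF assms(2,4)] by (simp add: K_def homotopic_loops_sym)
  ultimately show ?thesis
    using middle homotopic_loops_trans by blast
qed

lemma cis_lift_increment_eq:
  fixes f :: "complex \<Rightarrow> complex"
  assumes f: "continuous_on (ball q r - {q}) f" "\<forall>x\<in>ball q r - {q}. norm (f x) = 1"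
    and loops: "path \<gamma>\<^sub>1" "path \<gamma>\<^sub>2" "pathfinish \<gamma>\<^sub>1 = pathstart \<gamma>\<^sub>1" "pathfinish \<gamma>\<^sub>2 = pathstart \<gamma>\<^sub>2"
      "path_image \<gamma>\<^sub>1 \<subseteq> ball q r - {q}" "path_image \<gamma>\<^sub>2 \<subseteq> ball q r - {q}"
      "winding_number \<gamma>\<^sub>1 q = winding_number \<gamma>\<^sub>2 q"
    and lifts: "continuous_on {0..1} g\<^sub>1" "\<forall>t\<in>{0..1}. f (\<gamma>\<^sub>1 t) = cis (g\<^sub>1 t)"
      "continuous_on {0..1} g\<^sub>2" "\<forall>t\<in>{0..1}. f (\<gamma>\<^sub>2 t) = cis (g\<^sub>2 t)"
  shows "g\<^sub>1 1 - g\<^sub>1 0 = g\<^sub>2 1 - g\<^sub>2 0"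
proof -
  have "homotopic_loops (- {0}) (f \<circ> \<gamma>\<^sub>1) (f \<circ> \<gamma>\<^sub>2)"
  proof (rule homotopic_loops_continuous_image)
    show "f \<in> ball q r - {q} \<rightarrow> - {0}"
      using f(2) by force
  qed (fact homotopic_loops_punctured_ball[OF loops] f(1))+
  then have "winding_number (f \<circ> \<gamma>\<^sub>1) 0 = winding_number (f \<circ> \<gamma>\<^sub>2) 0"
    by (rule winding_number_homotopic_loops)
  moreover have "winding_number (f \<circ> \<gamma>\<^sub>1) 0 = of_real ((g\<^sub>1 1 - g\<^sub>1 0) / (2 * pi))"
    using lifts(1,2) by (intro winding_number_cis_lift) auto
  moreover have "winding_number (f \<circ> \<gamma>\<^sub>2) 0 = of_real ((g\<^sub>2 1 - g\<^sub>2 0) / (2 * pi))"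
    using lifts(3,4) by (intro winding_number_cis_lift) auto
  ultimately have "(g\<^sub>1 1 - g\<^sub>1 0) / (2 * pi) = (g\<^sub>2 1 - g\<^sub>2 0) / (2 * pi)"
    by (metis of_real_eq_iff)
  then show ?thesis
    by simp
qed

(* Every admissible loop and angle function have the increment (g 1 - g 0) / 2, so the THE in
   ph_index is determined: existence with \<epsilon> = r, uniqueness by testing on a small circle. *)
lemma ph_index_eq_cis_lift:
  assumes "r > 0"
    and lines: "\<forall>x\<in>ball q r - {q}. is_line (\<eta> x)"
    and cont: "continuous_on (ball q r - {q}) (\<lambda>x. line_code (\<eta> x))"
    and loop: "path \<gamma>" "pathfinish \<gamma> = pathstart \<gamma>" "path_image \<gamma> \<subseteq> ball q r - {q}"
      "winding_number \<gamma> q = 1"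
    and lift: "continuous_on {0..1} g" "\<forall>t\<in>{0..1}. line_code (\<eta> (\<gamma> t)) = cis (g t)"
  shows "ph_index \<eta> q = (g 1 - g 0) / (4 * pi)"
proof -
  have unit: "\<forall>x\<in>ball q r - {q}. norm (line_code (\<eta> x)) = 1"
    using lines norm_line_code by blast
  have increment: "(\<theta> 1 - \<theta> 0) / (2 * pi) = (g 1 - g 0) / (4 * pi)"
    if "path \<gamma>'" "pathfinish \<gamma>' = pathstart \<gamma>'" "path_image \<gamma>' \<subseteq> ball q r - {q}"
      "winding_number \<gamma>' q = 1" "continuous_on {0..1} \<theta>"
      "\<forall>t\<in>{0..1}. \<eta> (\<gamma>' t) = span {frame_vec (\<theta> t)}"
    for \<gamma>' \<theta>
  proof -
    have "\<gamma>' t \<in> ball q r - {q}" if "t \<in> {0..1}" for t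
      using \<open>path_image \<gamma>' \<subseteq> ball q r - {q}\<close> that unfolding path_image_def by blast
    then have "\<forall>t\<in>{0..1}. line_code (\<eta> (\<gamma>' t)) = cis (2 * \<theta> t)"
      using that(6) lines line_eq_span_frame_vec_iff by blast
    moreover have "continuous_on {0..1} (\<lambda>t. 2 * \<theta> t)"
      by (intro continuous_intros that(5))
    moreover have "winding_number \<gamma>' q = winding_number \<gamma> q"
      using that(4) loop(4) by simp
    ultimately have "2 * \<theta> 1 - 2 * \<theta> 0 = g 1 - g 0"
      using cis_lift_increment_eq[OF cont unit that(1) loop(1) that(2) loop(2) that(3) loop(3)] lift
      by blast
    then have "(g 1 - g 0) / (4 * pi) = (2 * (\<theta> 1 - \<theta> 0)) / (2 * (2 * pi))"
      by simp
    also have "\<dots> = (\<theta> 1 - \<theta> 0) / (2 * pi)"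
      by (rule mult_divide_mult_cancel_left) simp
    finally show ?thesis
      by simp
  qed
  show ?thesis
    unfolding ph_index_def
  proof (rule the_equality)
    show "\<exists>\<epsilon>>0. \<forall>\<gamma> \<theta>. simple_path \<gamma> \<and> pathfinish \<gamma> = pathstart \<gamma> \<and>
      path_image \<gamma> \<subseteq> ball q \<epsilon> - {q} \<and> winding_number \<gamma> q = 1 \<and> continuous_on {0..1} \<theta> \<and>
      (\<forall>t\<in>{0..1}. \<eta> (\<gamma> t) = span {frame_vec (\<theta> t)})
      \<longrightarrow> (g 1 - g 0) / (4 * pi) = (\<theta> 1 - \<theta> 0) / (2 * pi)"
      using \<open>r > 0\<close> increment simple_path_imp_path by metis
  next
    fix k
    assume "\<exists>\<epsilon>>0. \<forall>\<gamma> \<theta>. simple_path \<gamma> \<and> pathfinish \<gamma> = pathstart \<gamma> \<and>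
      path_image \<gamma> \<subseteq> ball q \<epsilon> - {q} \<and> winding_number \<gamma> q = 1 \<and> continuous_on {0..1} \<theta> \<and>
      (\<forall>t\<in>{0..1}. \<eta> (\<gamma> t) = span {frame_vec (\<theta> t)})
      \<longrightarrow> k = (\<theta> 1 - \<theta> 0) / (2 * pi)"
    then obtain \<epsilon> where "\<epsilon> > 0" and k: "\<forall>\<gamma> \<theta>. simple_path \<gamma> \<and> pathfinish \<gamma> = pathstart \<gamma> \<and>
      path_image \<gamma> \<subseteq> ball q \<epsilon> - {q} \<and> winding_number \<gamma> q = 1 \<and> continuous_on {0..1} \<theta> \<and>
      (\<forall>t\<in>{0..1}. \<eta> (\<gamma> t) = span {frame_vec (\<theta> t)})
      \<longrightarrow> k = (\<theta> 1 - \<theta> 0) / (2 * pi)"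
      by blast
    define c where "c = circlepath q (min \<epsilon> r / 2)"
    have c: "simple_path c" "path c" "pathfinish c = pathstart c" "winding_number c q = 1"
      "path_image c \<subseteq> ball q \<epsilon> - {q}" "path_image c \<subseteq> ball q r - {q}"
      using \<open>\<epsilon> > 0\<close> \<open>r > 0\<close>
      by (auto simp: c_def simple_path_circlepath winding_number_circlepath_centre)
    obtain g' where g': "continuous_on {0..1} g'" "\<forall>t\<in>{0..1}. line_code (\<eta> (c t)) = cis (g' t)"
      using cis_lift_along_path[OF cont unit c(2,6)] by blast
    define \<theta> where "\<theta> t = g' t / 2" for t
    have "continuous_on {0..1} \<theta>"
      unfolding \<theta>_def by (intro continuous_intros g'(1)) simp
    moreover have "\<forall>t\<in>{0..1}. \<eta> (c t) = span {frame_vec (\<theta> t)}"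
    proof
      fix t :: real assume "t \<in> {0..1}"
      then have "c t \<in> ball q r - {q}"
        using c(6) unfolding path_image_def by blast
      then show "\<eta> (c t) = span {frame_vec (\<theta> t)}"
        using g'(2) \<open>t \<in> {0..1}\<close> lines line_eq_span_frame_vec_iff by (simp add: \<theta>_def)
    qed
    ultimately show "k = (g 1 - g 0) / (4 * pi)"
      using k c increment[of c \<theta>] by auto
  qed
qed

lemma continuous_on_eigen_line_code:
  assumes "continuous_on S A"
    and "\<forall>x\<in>S. transpose (A x) = A x" "\<forall>x\<in>S. card (eigenvalues_of (A x)) = 2"
  shows "continuous_on S (\<lambda>x. line_code (eigen_line_field A x))"
proof -
  have "continuous_on S (\<lambda>x. sgn (deviator (A x)))"
    using assms top_eigenspace_symmetric(1) by (intro continuous_intros) auto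
  then show ?thesis
    by (rule continuous_on_eq) (simp add: assms eigen_line_field_def eigen_line_symmetric(2))
qed

lemma ph_index_line_code_relation:
  assumes "r > 0"
    and lines: "\<forall>x\<in>ball q r - {q}. is_line (\<eta>\<^sub>1 x) \<and> is_line (\<eta>\<^sub>2 x) \<and> is_line (\<eta> x)"
    and cont: "continuous_on (ball q r - {q}) (\<lambda>x. line_code (\<eta>\<^sub>1 x))"
      "continuous_on (ball q r - {q}) (\<lambda>x. line_code (\<eta>\<^sub>2 x))"
    and code: "\<forall>x\<in>ball q r - {q}. line_code (\<eta> x) = line_code (\<eta>\<^sub>1 x) ^ 2 * cnj (line_code (\<eta>\<^sub>2 x))"
  shows "ph_index \<eta> q = 2 * ph_index \<eta>\<^sub>1 q - ph_index \<eta>\<^sub>2 q"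
proof -
  define c where "c = circlepath q (r / 2)"
  have c: "path c" "pathfinish c = pathstart c" "path_image c \<subseteq> ball q r - {q}" "winding_number c q = 1"
    using \<open>r > 0\<close> by (auto simp: c_def winding_number_circlepath_centre)
  obtain g\<^sub>1 where g\<^sub>1: "continuous_on {0..1} g\<^sub>1" "\<forall>t\<in>{0..1}. line_code (\<eta>\<^sub>1 (c t)) = cis (g\<^sub>1 t)"
    using cis_lift_along_path[OF cont(1) _ c(1,3)] lines norm_line_code by blast
  obtain g\<^sub>2 where g\<^sub>2: "continuous_on {0..1} g\<^sub>2" "\<forall>t\<in>{0..1}. line_code (\<eta>\<^sub>2 (c t)) = cis (g\<^sub>2 t)"
    using cis_lift_along_path[OF cont(2) _ c(1,3)] lines norm_line_code by blast
  have "continuous_on (ball q r - {q}) (\<lambda>x. line_code (\<eta>\<^sub>1 x) ^ 2 * cnj (line_code (\<eta>\<^sub>2 x)))"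
    by (intro continuous_intros cont)
  then have "continuous_on (ball q r - {q}) (\<lambda>x. line_code (\<eta> x))"
    by (rule continuous_on_eq) (simp add: code)
  moreover have "\<forall>t\<in>{0..1}. line_code (\<eta> (c t)) = cis (2 * g\<^sub>1 t - g\<^sub>2 t)"
  proof
    fix t :: real assume "t \<in> {0..1}"
    then have "c t \<in> ball q r - {q}"
      using c(3) unfolding path_image_def by blast
    with g\<^sub>1 g\<^sub>2 \<open>t \<in> {0..1}\<close> show "line_code (\<eta> (c t)) = cis (2 * g\<^sub>1 t - g\<^sub>2 t)"
      by (simp add: code power2_eq_square cis_cnj cis_mult algebra_simps)
  qed
  moreover have "continuous_on {0..1} (\<lambda>t. 2 * g\<^sub>1 t - g\<^sub>2 t)"
    by (intro continuous_intros g\<^sub>1(1) g\<^sub>2(1))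
  ultimately have index: "ph_index \<eta> q = (2 * g\<^sub>1 1 - g\<^sub>2 1 - (2 * g\<^sub>1 0 - g\<^sub>2 0)) / (4 * pi)"
    using ph_index_eq_cis_lift[OF \<open>r > 0\<close> _ _ c] lines by blast
  have index\<^sub>1: "ph_index \<eta>\<^sub>1 q = (g\<^sub>1 1 - g\<^sub>1 0) / (4 * pi)"
    using ph_index_eq_cis_lift[OF \<open>r > 0\<close> _ cont(1) c g\<^sub>1] lines by blast
  have index\<^sub>2: "ph_index \<eta>\<^sub>2 q = (g\<^sub>2 1 - g\<^sub>2 0) / (4 * pi)"
    using ph_index_eq_cis_lift[OF \<open>r > 0\<close> _ cont(2) c g\<^sub>2] lines by blast
  show ?thesis
    unfolding index index\<^sub>1 index\<^sub>2 by (simp add: field_simps)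
qed

theorem theorem2:
  fixes A :: "complex \<Rightarrow> real^2^2" and q :: complex and V W :: "complex set"
    and \<xi> :: "complex \<Rightarrow> (real^2) set"
  assumes "open V" and "q \<in> V"
    and "continuous_on V A"
    and "\<forall>p\<in>V. transpose (A p) = A p"
    and "\<forall>p\<in>V - {q}. card (eigenvalues_of (A p)) = 2"
    and "open W" and "q \<in> W"
    and "continuous_line_field (W - {q}) \<xi>"
  shows "2 * tensor_index A q =
         ph_index (apply_tensor (\<lambda>p. A p - (trace (A p) / 2) *\<^sub>R mat 1) \<xi>) q + ph_index \<xi> q"
proof -
  obtain r where "r > 0" and r: "ball q r \<subseteq> V \<inter> W"
    using assms(1,2,6,7) by (meson open_Int IntI openE)
  define S where "S = ball q r - {q}"
  have sym: "\<forall>x\<in>S. transpose (A x) = A x" and card: "\<forall>x\<in>S. card (eigenvalues_of (A x)) = 2"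
    using r assms(4,5) by (auto simp: S_def)
  let ?E = "eigen_line_field A" and ?B = "apply_tensor (\<lambda>p. A p - (trace (A p) / 2) *\<^sub>R mat 1) \<xi>"
  have lines: "is_line (?E x) \<and> is_line (\<xi> x) \<and> is_line (?B x)"
    and code: "line_code (?B x) = line_code (?E x) ^ 2 * cnj (line_code (\<xi> x))" if "x \<in> S" for x
  proof -
    have "is_line (\<xi> x)"
      using that r continuous_line_field_is_line[OF assms(8)] by (auto simp: S_def)
    with that sym card show "is_line (?E x) \<and> is_line (\<xi> x) \<and> is_line (?B x)"
      and "line_code (?B x) = line_code (?E x) ^ 2 * cnj (line_code (\<xi> x))"
      by (simp_all add: apply_tensor_def eigen_line_field_def eigen_line_symmetric
          traceless_image_line top_eigenspace_symmetric(1))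
  qed
  have "continuous_on S A"
    by (rule continuous_on_subset[OF assms(3)]) (use r in \<open>auto simp: S_def\<close>)
  then have "continuous_on S (\<lambda>x. line_code (?E x))"
    using sym card by (rule continuous_on_eigen_line_code)
  moreover have "continuous_on S (\<lambda>x. line_code (\<xi> x))"
    by (rule continuous_on_subset[OF continuous_on_line_code[OF assms(8)]]) (use r in \<open>auto simp: S_def\<close>)
  ultimately have "ph_index ?B q = 2 * ph_index ?E q - ph_index \<xi> q"
    using lines code unfolding S_def by (intro ph_index_line_code_relation[OF \<open>r > 0\<close>]) auto
  then show ?thesis
    unfolding tensor_index_def by simp
qed

end
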